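(* Let $\delta=x^{\mathbf d}f(\theta)$ be a homogeneous differential operator of degree $\mathbf d$ with $\mathbf d\neq\mathbf 0$, $-\mathbf d\in S$, $\mathbf d=q\mathbf e$ ($q\in\mathbb Z_{\ge1}$, $\mathbf e$ primitive). If $\delta$ fixes a nonzero monomial ideal $I$, then there exists a subset $\mathcal B\subseteq\mathbb N^n$ compatible with $\mathbf d$ such that (1) $\operatorname{val}(\mathbf a)>-\infty$ for all $\mathbf a\in W_{\mathcal B}$; (2) for all $\mathbf a\in V'_{\mathrm{mon}}(f)\cap W_{\mathcal B}$ and $i=0,\dots,q-1$, $\mathbf a-i\mathbf e\in V_{\mathrm{mon}}(f)$; (3) for all $\mathbf a,\mathbf b\in V'_{\mathrm{mon}}(f)\cap W_{\mathcal B}$, $\mathbf a-\mathbf b\notin S-\mathbf e$; and (4) $I=(x^{\mathbf a}\mid\mathbf a\in V'_{\mathrm{mon}}(f)\cap W_{\mathcal B})$ and $\operatorname{Exp} I=\{\mathbf a\in W_{\mathcal B}:\operatorname{pval}(\mathbf a)\ge0\}$.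
   Context: Standing notation. Fix $d\ge 1$. Let $\sigma\subseteq\mathbb R^d$ be a full-dimensional, strongly convex rational polyhedral cone, so $\sigma^\vee$ is full-dimensional and strongly convex. $S=\sigma^\vee\cap\mathbb Z^d$, $R=\mathbb C[S]$ with monomial basis $x^{\mathbf a}$, $\mathbf a\in S$. $h_1,\dots,h_n$ are the primitive support functions of the facets of $\sigma^\vee$, so $S=\{\mathbf a\in\mathbb Z^d:h_i(\mathbf a)\ge0\ \forall i\}$. $(g,m)!=\prod_{j=0}^m(g-j)$ for $m\ge0$, $=1$ for $m<0$; $H_{\mathbf d}=\prod_i(h_i,h_i(-\mathbf d)-1)!$. For $f$ divisible by $H_{\mathbf d}$, $\delta=x^{\mathbf d}f(\theta)$ acts by $\delta(x^{\mathbf a})=f(\mathbf a)x^{\mathbf a+\mathbf d}$. $\operatorname{Exp} I=\{\mathbf a\in S:x^{\mathbf a}\in I\}$; $I$ is $\delta$-fixed if $\delta(I)=I$. $V_{\mathrm{mon}}(f)=\{\mathbf a\in\mathbb Z^d:f(\mathbf a)=0\}$; $S-\mathbf e=\{\mathbf s-\mathbf e:\mathbf s\in S\}$. For $\mathbf a\in\mathbb Z^d$, $\operatorname{val}(\mathbf a)=\inf\{t\in\mathbb R:\mathbf a+t\mathbf d\in V_{\mathrm{mon}}(f)\}\in\mathbb R\cup\{\pm\infty\}$ ($\inf\emptyset=+\infty$). When $\operatorname{val}(\mathbf a)$ is finite, $\operatorname{pval}(\mathbf a)=\max\{t\in[\operatorname{val}(\mathbf a),\operatorname{val}(\mathbf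 a)+1):\mathbf a+t\mathbf d\in V_{\mathrm{mon}}(f)\}$ and $\operatorname{vpt}(\mathbf a)=\mathbf a+\operatorname{pval}(\mathbf a)\mathbf d$. $V'_{\mathrm{mon}}(f)=\{\operatorname{vpt}(\mathbf a):\mathbf a\in\mathbb Z^d,\ \operatorname{val}(\mathbf a)\text{ finite}\}$. A tuple $\beta\in\mathbb N^n$ is compatible with $\mathbf d$ if for every $i$, $\beta_i=0$ or $h_i(\mathbf d)=0$; $\mathcal B\subseteq\mathbb N^n$ is compatible with $\mathbf d$ if each element is. $W_\beta=\{\mathbf a\in S: h_i(\mathbf a)\ge\beta_i\ \forall i\}$, $W_{\mathcal B}=\bigcup_{\beta\in\mathcal B}W_\beta$. *)

theory Defs
  imports "HOL-Analysis.Analysis" "HOL-Library.Poly_Mapping" "HOL-Library.Extended_Real"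
begin

definition rvec :: "int ^ 'd \<Rightarrow> real ^ 'd" where
  "rvec a = (\<chi> k. real_of_int (a $ k))"

definition cvec :: "int ^ 'd \<Rightarrow> complex ^ 'd" where
  "cvec a = (\<chi> k. complex_of_int (a $ k))"

definition hv :: "int ^ 'd \<Rightarrow> int ^ 'd \<Rightarrow> int" where
  "hv h a = (\<Sum>k\<in>UNIV. h $ k * a $ k)"

definition primitive_vec :: "int ^ 'd \<Rightarrow> bool" where
  "primitive_vec v \<longleftrightarrow> (\<forall>k::int. (\<forall>i. k dvd v $ i) \<longrightarrow> is_unit k)"

definition rat_poly_cone :: "(real ^ 'd) set \<Rightarrow> bool" where
  "rat_poly_cone \<sigma> \<longleftrightarrow> (\<exists>G::(int ^ 'd) set. finite G \<and>
      \<sigma> = {(\<Sum>g\<in>G. c g *\<^sub>R rvec g) | c. \<forall>g\<in>G. 0 \<le> c g})"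

definition strongly_convex :: "(real ^ 'd) set \<Rightarrow> bool" where
  "strongly_convex \<sigma> \<longleftrightarrow> \<sigma> \<inter> uminus ` \<sigma> = {0}"

definition full_dim :: "(real ^ 'd) set \<Rightarrow> bool" where
  "full_dim \<sigma> \<longleftrightarrow> interior \<sigma> \<noteq> {}"

definition dual_cone :: "(real ^ 'd) set \<Rightarrow> (real ^ 'd) set" where
  "dual_cone \<sigma> = {u. \<forall>v\<in>\<sigma>. 0 \<le> u \<bullet> v}"

definition facet_support_functions :: "(real ^ 'd) set \<Rightarrow> (int ^ 'd) set" where
  "facet_support_functions C = {v. primitive_vec v \<and>
      (\<exists>F. F face_of C \<and> aff_dim F = int CARD('d) - 1 \<and>
           (\<forall>u\<in>C. 0 \<le> rvec v \<bullet> u) \<and> (\<forall>u\<in>F. rvec v \<bullet> u = 0))}"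

definition toric_setup :: "(real ^ 'd) set \<Rightarrow> ('i::finite \<Rightarrow> int ^ 'd) \<Rightarrow> bool" where
  "toric_setup \<sigma> h \<longleftrightarrow> rat_poly_cone \<sigma> \<and> full_dim \<sigma> \<and> strongly_convex \<sigma> \<and>
     bij_betw h UNIV (facet_support_functions (dual_cone \<sigma>))"

definition semigrp :: "(real ^ 'd) set \<Rightarrow> (int ^ 'd) set" where
  "semigrp \<sigma> = {a. rvec a \<in> dual_cone \<sigma>}"

section \<open>The ring R = C[S] inside the group ring C[Z^d]\<close>

type_synonym 'd laurent = "(int ^ 'd) \<Rightarrow>\<^sub>0 complex"

definition Rring :: "(real ^ 'd) set \<Rightarrow> 'd laurent set" where
  "Rring \<sigma> = {p. Poly_Mapping.keys p \<subseteq> semigrp \<sigma>}"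

definition xmon :: "int ^ 'd \<Rightarrow> 'd laurent" where
  "xmon a = Poly_Mapping.single a 1"

definition is_ideal :: "(real ^ 'd) set \<Rightarrow> 'd laurent set \<Rightarrow> bool" where
  "is_ideal \<sigma> J \<longleftrightarrow> J \<subseteq> Rring \<sigma> \<and> 0 \<in> J \<and> (\<forall>p\<in>J. \<forall>q\<in>J. p + q \<in> J) \<and>
      (\<forall>r\<in>Rring \<sigma>. \<forall>p\<in>J. r * p \<in> J)"

definition ideal_gen :: "(real ^ 'd) set \<Rightarrow> 'd laurent set \<Rightarrow> 'd laurent set" where
  "ideal_gen \<sigma> G = \<Inter>{J. is_ideal \<sigma> J \<and> G \<subseteq> J}"

definition monomial_ideal :: "(real ^ 'd) set \<Rightarrow> 'd laurent set \<Rightarrow> bool" where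
  "monomial_ideal \<sigma> I \<longleftrightarrow> is_ideal \<sigma> I \<and> I = ideal_gen \<sigma> {xmon a | a. xmon a \<in> I}"

definition Exp :: "(real ^ 'd) set \<Rightarrow> 'd laurent set \<Rightarrow> (int ^ 'd) set" where
  "Exp \<sigma> I = {a \<in> semigrp \<sigma>. xmon a \<in> I}"

text \<open>Polynomial functions C^d -> C (C is infinite, so these are the polynomials).\<close>
definition poly_fun :: "(complex ^ 'd \<Rightarrow> complex) \<Rightarrow> bool" where
  "poly_fun f \<longleftrightarrow> (\<exists>c :: ('d \<Rightarrow> nat) \<Rightarrow> complex. finite {\<alpha>. c \<alpha> \<noteq> 0} \<and>
      (\<forall>z. f z = (\<Sum>\<alpha>\<in>{\<alpha>. c \<alpha> \<noteq> 0}. c \<alpha> * (\<Prod>k\<in>UNIV. (z $ k) ^ (\<alpha> k)))))"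

definition poly_dvd :: "(complex ^ 'd \<Rightarrow> complex) \<Rightarrow> (complex ^ 'd \<Rightarrow> complex) \<Rightarrow> bool" where
  "poly_dvd g f \<longleftrightarrow> (\<exists>u. poly_fun u \<and> (\<forall>z. f z = g z * u z))"

definition ffact :: "complex \<Rightarrow> int \<Rightarrow> complex" where
  "ffact g m = (if m < 0 then 1 else (\<Prod>j\<in>{0..nat m}. g - of_nat j))"

definition hpoly :: "int ^ 'd \<Rightarrow> complex ^ 'd \<Rightarrow> complex" where
  "hpoly h z = (\<Sum>k\<in>UNIV. complex_of_int (h $ k) * z $ k)"

definition Hd :: "('i::finite \<Rightarrow> int ^ 'd) \<Rightarrow> int ^ 'd \<Rightarrow> complex ^ 'd \<Rightarrow> complex" where
  "Hd h d z = (\<Prod>i\<in>UNIV. ffact (hpoly (h i) z) (hv (h i) (- d) - 1))"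

text \<open>delta = x^d f(theta): delta(x^a) = f(a) x^(a+d), extended linearly.\<close>
definition delta :: "int ^ 'd \<Rightarrow> (complex ^ 'd \<Rightarrow> complex) \<Rightarrow> 'd laurent \<Rightarrow> 'd laurent" where
  "delta d f p = (\<Sum>a\<in>Poly_Mapping.keys p. Poly_Mapping.single (a + d) (Poly_Mapping.lookup p a * f (cvec a)))"

definition Vmon :: "(complex ^ 'd \<Rightarrow> complex) \<Rightarrow> (int ^ 'd) set" where
  "Vmon f = {a. f (cvec a) = 0}"

definition line_zeros :: "int ^ 'd \<Rightarrow> (complex ^ 'd \<Rightarrow> complex) \<Rightarrow> int ^ 'd \<Rightarrow> real set" where
  "line_zeros d f a = {t. \<exists>z\<in>Vmon f. rvec z = rvec a + t *\<^sub>R rvec d}"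

definition val :: "int ^ 'd \<Rightarrow> (complex ^ 'd \<Rightarrow> complex) \<Rightarrow> int ^ 'd \<Rightarrow> ereal" where
  "val d f a = Inf (ereal ` line_zeros d f a)"

definition pval :: "int ^ 'd \<Rightarrow> (complex ^ 'd \<Rightarrow> complex) \<Rightarrow> int ^ 'd \<Rightarrow> real" where
  "pval d f a = Max {t \<in> line_zeros d f a.
      real_of_ereal (val d f a) \<le> t \<and> t < real_of_ereal (val d f a) + 1}"

definition vpt :: "int ^ 'd \<Rightarrow> (complex ^ 'd \<Rightarrow> complex) \<Rightarrow> int ^ 'd \<Rightarrow> int ^ 'd" where
  "vpt d f a = (THE z. rvec z = rvec a + pval d f a *\<^sub>R rvec d)"

definition Vmon' :: "int ^ 'd \<Rightarrow> (complex ^ 'd \<Rightarrow> complex) \<Rightarrow> (int ^ 'd) set" where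
  "Vmon' d f = {vpt d f a | a. \<bar>val d f a\<bar> \<noteq> \<infinity>}"

definition compatible :: "('i \<Rightarrow> int ^ 'd) \<Rightarrow> int ^ 'd \<Rightarrow> ('i \<Rightarrow> nat) \<Rightarrow> bool" where
  "compatible h d \<beta> \<longleftrightarrow> (\<forall>i. \<beta> i = 0 \<or> hv (h i) d = 0)"

definition W :: "(real ^ 'd) set \<Rightarrow> ('i \<Rightarrow> int ^ 'd) \<Rightarrow> ('i \<Rightarrow> nat) \<Rightarrow> (int ^ 'd) set" where
  "W \<sigma> h \<beta> = {a \<in> semigrp \<sigma>. \<forall>i. int (\<beta> i) \<le> hv (h i) a}"

definition WB :: "(real ^ 'd) set \<Rightarrow> ('i \<Rightarrow> int ^ 'd) \<Rightarrow> ('i \<Rightarrow> nat) set \<Rightarrow> (int ^ 'd) set" where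
  "WB \<sigma> h B = (\<Union>\<beta>\<in>B. W \<sigma> h \<beta>)"

end

theory Submission
  imports Defs
begin

text \<open>
  Since \<open>-e \<in> S\<close> and \<open>S\<close> is pointed, the exponents of \<open>I\<close> on any line \<open>c + \<int>e\<close> that meets
  \<open>Exp I\<close> form a ray \<open>{c + je | j \<le> M}\<close>. Writing \<open>\<delta>(I) = I\<close> monomial by monomial:
  \<open>\<delta>(I) \<supseteq> I\<close> says that \<open>a \<in> Exp I\<close> implies \<open>a - d \<in> Exp I\<close> and \<open>f(a - d) \<noteq> 0\<close>, and
  \<open>\<delta>(I) \<subseteq> I\<close> says that \<open>a \<in> Exp I\<close> and \<open>f(a) \<noteq> 0\<close> imply \<open>a + d \<in> Exp I\<close>. As \<open>d = qe\<close>,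
  on the ray \<open>f\<close> vanishes exactly at the top \<open>q\<close> points, so \<open>val\<close>, \<open>pval\<close> and \<open>vpt\<close> of \<open>c\<close>
  are \<open>(M - q + 1)/q\<close>, \<open>M/q\<close> and the top point \<open>c + Me\<close>. Taking for \<open>\<B>\<close> the bounds on the
  facet functions constant along \<open>d\<close> realised by exponents of \<open>I\<close>, every line through
  \<open>W\<^sub>\<B>\<close> meets \<open>Exp I\<close>, and all four claims are read off the rays: two top points differing
  by \<open>s - e\<close> would put one point above a top, and every exponent lies below its top point by
  an element \<open>k(-e)\<close> of \<open>S\<close>.
\<close>

lemma rvec_add: "rvec (a + b) = rvec a + rvec b"
  by (simp add: rvec_def vec_eq_iff)

lemma rvec_diff: "rvec (a - b) = rvec a - rvec b"
  by (simp add: rvec_def vec_eq_iff)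

lemma rvec_uminus: "rvec (- a) = - rvec a"
  by (simp add: rvec_def vec_eq_iff)

lemma rvec_zero [simp]: "rvec 0 = 0"
  by (simp add: rvec_def vec_eq_iff)

lemma rvec_smult: "rvec (c *s a) = real_of_int c *\<^sub>R rvec a"
  by (simp add: rvec_def vec_eq_iff)

lemma rvec_eq_iff: "rvec a = rvec b \<longleftrightarrow> a = b"
  by (simp add: rvec_def vec_eq_iff)

lemma inner_rvec: "rvec v \<bullet> rvec x = real_of_int (hv v x)"
  by (simp add: rvec_def hv_def inner_vec_def)

lemma hv_add: "hv v (a + b) = hv v a + hv v b"
  by (simp add: hv_def sum.distrib algebra_simps)

lemma hv_diff: "hv v (a - b) = hv v a - hv v b"
  by (simp add: hv_def sum_subtractf algebra_simps)

lemma hv_uminus: "hv v (- a) = - hv v a"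
  by (simp add: hv_def sum_negf)

lemma hv_smult: "hv v (c *s a) = c * hv v a"
  by (simp add: hv_def sum_distrib_left algebra_simps)

lemma primitive_vec_nonzero: "primitive_vec v \<Longrightarrow> v \<noteq> 0"
  unfolding primitive_vec_def by (metis dvd_0_right zero_index not_is_unit_0)

lemma primitive_vec_decomp:
  fixes g :: "int ^ 'd"
  assumes "g \<noteq> 0"
  obtains k v where "0 < k" "g = k *s v" "primitive_vec v"
proof -
  define k where "k = Gcd (range (\<lambda>i. g $ i))"
  have k_dvd: "k dvd g $ i" for i
    unfolding k_def by (rule Gcd_dvd) simp
  have "k \<noteq> 0"
    using assms unfolding k_def by (auto simp: vec_eq_iff)
  moreover have "k \<ge> 0"
    unfolding k_def by (metis abs_ge_zero normalize_Gcd normalize_int_def)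
  ultimately have k_pos: "k > 0" by simp
  define v where "v = (\<chi> i. g $ i div k)"
  have g_eq: "g = k *s v"
    using k_dvd by (simp add: v_def vec_eq_iff)
  have "primitive_vec v" unfolding primitive_vec_def
  proof (intro allI impI)
    fix m :: int assume "\<forall>i. m dvd v $ i"
    then have "m * k dvd g $ i" for i
      using g_eq by (metis mult_dvd_mono dvd_refl mult.commute vector_smult_component)
    then have "m * k dvd k"
      unfolding k_def by (intro Gcd_greatest) auto
    then have "m * k dvd 1 * k" by simp
    then show "is_unit m"
      using k_pos by (subst (asm) dvd_mult_cancel_right) auto
  qed
  with k_pos g_eq that show ?thesis by blast
qed

section \<open>Rational polyhedral cones and their facets\<close>

lemma finite_Inter_irredundant:
  assumes "finite \<H>"
  obtains F where "F \<subseteq> \<H>" "\<Inter>F = \<Inter>\<H>" "\<And>F'. F' \<subset> F \<Longrightarrow> \<Inter>F' \<noteq> \<Inter>\<H>"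
proof -
  define P where "P F \<longleftrightarrow> F \<subseteq> \<H> \<and> \<Inter>F = \<Inter>\<H>" for F
  obtain F where F: "P F" and least: "\<And>F'. P F' \<Longrightarrow> card F \<le> card F'"
    using ex_has_least_nat[of P \<H> card] by (auto simp: P_def)
  have "\<Inter>F' \<noteq> \<Inter>\<H>" if "F' \<subset> F" for F'
  proof
    assume "\<Inter>F' = \<Inter>\<H>"
    with that F have "card F \<le> card F'"
      by (intro least) (auto simp: P_def)
    moreover have "finite F"
      using F assms finite_subset by (auto simp: P_def)
    ultimately show False
      using psubset_card_mono[OF _ that] by simp
  qed
  with F that show ?thesis by (auto simp: P_def)
qed

lemma irredundant_halfspace_facet:
  fixes C :: "'a::euclidean_space set"
  assumes int_C: "interior C \<noteq> {}"
    and fin: "finite F" and C_eq: "C = \<Inter>F" and irred: "\<And>F'. F' \<subset> F \<Longrightarrow> C \<noteq> \<Inter>F'"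
    and nrm: "\<And>H. H \<in> F \<Longrightarrow> H = {x. 0 \<le> nrm H \<bullet> x}"
    and H_in: "H \<in> F"
  shows "nrm H \<noteq> 0" and "C \<inter> {x. nrm H \<bullet> x = 0} facet_of C"
proof -
  have nrm_nonzero: "- nrm H \<noteq> 0 \<and> H = {x. - nrm H \<bullet> x \<le> 0}" if "H \<in> F" for H
  proof
    show H_eq: "H = {x. - nrm H \<bullet> x \<le> 0}"
      using nrm[OF that] by simp
    have "H \<noteq> UNIV"
    proof
      assume "H = UNIV"
      then have "\<Inter>(F - {H}) = \<Inter>F" by auto
      moreover have "F - {H} \<subset> F" using that by auto
      ultimately show False using irred C_eq by metis
    qed
    then show "- nrm H \<noteq> 0"
      using H_eq by (metis (no_types, lifting) UNIV_eq_I inner_zero_left mem_Collect_eq order_refl)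
  qed
  then show "nrm H \<noteq> 0"
    using H_in by simp
  have aff_C: "affine hull C = UNIV"
    using affine_hull_nonempty_interior[OF int_C] .
  have "C = affine hull C \<inter> \<Inter>F"
    using C_eq aff_C by simp
  moreover have "C \<subset> affine hull C \<inter> \<Inter>F'" if "F' \<subset> F" for F'
    using C_eq aff_C irred[OF that] that by auto
  ultimately have "C \<inter> {x. - nrm H \<bullet> x = 0} facet_of C"
    using facet_of_polyhedron_explicit[OF fin _ nrm_nonzero, of C] H_in by blast
  then show "C \<inter> {x. nrm H \<bullet> x = 0} facet_of C"
    by simp
qed

lemma irredundant_halfspace_facet_support_function:
  fixes C :: "(real ^ 'd) set"
  assumes int_C: "interior C \<noteq> {}"
    and fin: "finite F" and C_eq: "C = \<Inter>F" and irred: "\<And>F'. F' \<subset> F \<Longrightarrow> C \<noteq> \<Inter>F'"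
    and halfspaces: "\<forall>H\<in>F. \<exists>g::int ^ 'd. H = {x. 0 \<le> rvec g \<bullet> x}"
    and H_in: "H \<in> F"
  obtains v where "v \<in> facet_support_functions C" "H = {x. 0 \<le> rvec v \<bullet> x}"
proof -
  obtain g where g: "\<And>H. H \<in> F \<Longrightarrow> H = {x. 0 \<le> rvec (g H) \<bullet> x}"
    using halfspaces by metis
  have facet: "rvec (g H) \<noteq> 0" "C \<inter> {x. rvec (g H) \<bullet> x = 0} facet_of C"
    using irredundant_halfspace_facet[where nrm = "\<lambda>H. rvec (g H)", OF int_C fin C_eq irred g H_in]
    by auto
  then have "g H \<noteq> 0"
    by auto
  then obtain k v where kv: "0 < k" "g H = k *s v" "primitive_vec v"
    by (rule primitive_vec_decomp)
  have rg: "rvec (g H) = real_of_int k *\<^sub>R rvec v"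
    using kv by (simp add: rvec_smult)
  have H_eq: "H = {x. 0 \<le> rvec v \<bullet> x}"
    using g[OF H_in] rg kv(1) by (simp add: zero_le_mult_iff)
  have "v \<in> facet_support_functions C" unfolding facet_support_functions_def
  proof (intro CollectI conjI exI ballI)
    let ?Fc = "C \<inter> {x. rvec (g H) \<bullet> x = 0}"
    show "?Fc face_of C"
      using facet(2) facet_of_imp_face_of by blast
    show "aff_dim ?Fc = int CARD('d) - 1"
      using facet(2) aff_dim_nonempty_interior[OF int_C] by (simp add: facet_of_def)
    show "0 \<le> rvec v \<bullet> x" if "x \<in> C" for x
      using that H_in H_eq C_eq by blast
    show "rvec v \<bullet> x = 0" if "x \<in> ?Fc" for x
      using that rg kv(1) by simp
  qed (fact kv)
  with H_eq that show ?thesis by blast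
qed

lemma mem_if_facet_support_functions_nonneg:
  fixes C :: "(real ^ 'd) set"
  assumes int_C: "interior C \<noteq> {}" and fin: "finite G"
    and C_eq: "C = {x. \<forall>g\<in>G. 0 \<le> rvec g \<bullet> x}"
    and u: "\<forall>v\<in>facet_support_functions C. 0 \<le> rvec v \<bullet> u"
  shows "u \<in> C"
proof -
  define \<H> where "\<H> = (\<lambda>g. {x. 0 \<le> rvec g \<bullet> x}) ` G"
  have "finite \<H>"
    using fin by (simp add: \<H>_def)
  then obtain F where F: "F \<subseteq> \<H>" "\<Inter>F = \<Inter>\<H>" "\<And>F'. F' \<subset> F \<Longrightarrow> \<Inter>F' \<noteq> \<Inter>\<H>"
    using finite_Inter_irredundant by blast
  have C_Inter: "C = \<Inter>F"
    using C_eq F(2) by (auto simp: \<H>_def)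
  have fin_F: "finite F"
    using F(1) \<open>finite \<H>\<close> finite_subset by blast
  have irred: "C \<noteq> \<Inter>F'" if "F' \<subset> F" for F'
    using F(2) F(3)[OF that] C_Inter by auto
  have halfspaces: "\<forall>H\<in>F. \<exists>g::int ^ 'd. H = {x. 0 \<le> rvec g \<bullet> x}"
    using F(1) by (auto simp: \<H>_def)
  have "u \<in> H" if H_in: "H \<in> F" for H
  proof -
    obtain v where "v \<in> facet_support_functions C" "H = {x. 0 \<le> rvec v \<bullet> x}"
      by (rule irredundant_halfspace_facet_support_function[OF int_C fin_F C_Inter irred halfspaces H_in])
    with u show ?thesis by blast
  qed
  with C_Inter show ?thesis by blast
qed

locale finitely_generated_cone =
  fixes \<sigma> :: "(real ^ 'd) set" and G :: "(int ^ 'd) set"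
  assumes finite_generators: "finite G"
    and cone_eq: "\<sigma> = {(\<Sum>g\<in>G. c g *\<^sub>R rvec g) | c. \<forall>g\<in>G. 0 \<le> c g}"
begin

lemma nonneg_combination_mem: "(\<forall>g\<in>G. 0 \<le> c g) \<Longrightarrow> (\<Sum>g\<in>G. c g *\<^sub>R rvec g) \<in> \<sigma>"
  unfolding cone_eq by blast

lemma generator_mem: "g \<in> G \<Longrightarrow> rvec g \<in> \<sigma>"
  using nonneg_combination_mem[of "\<lambda>x. if x = g then 1 else 0"] finite_generators
  by (simp add: if_distrib[of "\<lambda>c. c *\<^sub>R _"] sum.delta cong: if_cong)

lemma add_mem:
  assumes "x \<in> \<sigma>" "y \<in> \<sigma>"
  shows "x + y \<in> \<sigma>"
proof -
  obtain c c' where "x = (\<Sum>g\<in>G. c g *\<^sub>R rvec g)" "\<forall>g\<in>G. 0 \<le> c g"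
    "y = (\<Sum>g\<in>G. c' g *\<^sub>R rvec g)" "\<forall>g\<in>G. 0 \<le> c' g"
    using assms unfolding cone_eq by auto
  then show ?thesis
    using nonneg_combination_mem[of "\<lambda>g. c g + c' g"] by (simp add: sum.distrib scaleR_add_left)
qed

lemma scaleR_mem:
  assumes "x \<in> \<sigma>" "0 \<le> a"
  shows "a *\<^sub>R x \<in> \<sigma>"
proof -
  obtain c where "x = (\<Sum>g\<in>G. c g *\<^sub>R rvec g)" "\<forall>g\<in>G. 0 \<le> c g"
    using assms unfolding cone_eq by auto
  then show ?thesis
    using nonneg_combination_mem[of "\<lambda>g. a * c g"] assms(2) by (simp add: scaleR_sum_right)
qed

lemma sum_mem: "finite A \<Longrightarrow> (\<And>y. y \<in> A \<Longrightarrow> 0 \<le> u y \<and> y \<in> \<sigma>) \<Longrightarrow> (\<Sum>y\<in>A. u y *\<^sub>R y) \<in> \<sigma>"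
proof (induction A rule: finite_induct)
  case empty
  show ?case
    using nonneg_combination_mem[of "\<lambda>_. 0"] by simp
qed (auto intro: add_mem scaleR_mem)

lemma dual_cone_eq: "dual_cone \<sigma> = {u. \<forall>g\<in>G. 0 \<le> rvec g \<bullet> u}"
proof
  show "dual_cone \<sigma> \<subseteq> {u. \<forall>g\<in>G. 0 \<le> rvec g \<bullet> u}"
    using generator_mem by (auto simp: dual_cone_def inner_commute)
  show "{u. \<forall>g\<in>G. 0 \<le> rvec g \<bullet> u} \<subseteq> dual_cone \<sigma>"
    unfolding dual_cone_def cone_eq
    by (auto simp: inner_sum_right inner_commute intro!: sum_nonneg)
qed

lemma zero_notin_convex_hull_generators:
  assumes "strongly_convex \<sigma>"
  shows "0 \<notin> convex hull (rvec ` {g\<in>G. rvec g \<noteq> 0})"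
proof
  define Y where "Y = rvec ` {g\<in>G. rvec g \<noteq> 0}"
  have fin_Y: "finite Y"
    using finite_generators by (simp add: Y_def)
  have Y_sub: "Y \<subseteq> \<sigma>" and zero_notin: "0 \<notin> Y"
    using generator_mem by (auto simp: Y_def)
  assume "0 \<in> convex hull (rvec ` {g\<in>G. rvec g \<noteq> 0})"
  then obtain u where u: "\<forall>y\<in>Y. 0 \<le> u y" "sum u Y = 1" "(\<Sum>y\<in>Y. u y *\<^sub>R y) = 0"
    using fin_Y by (auto simp: convex_hull_finite Y_def[symmetric])
  then obtain y0 where y0: "y0 \<in> Y" "u y0 \<noteq> 0"
    by (metis sum.neutral zero_neq_one)
  then have u_pos: "u y0 > 0"
    using u(1) by force
  define w where "w = u y0 *\<^sub>R y0"
  have "w \<in> \<sigma>"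
    using Y_sub y0(1) u_pos by (auto simp: w_def intro!: scaleR_mem)
  have "w + (\<Sum>y\<in>Y - {y0}. u y *\<^sub>R y) = 0"
    using u(3) fin_Y y0(1) by (simp add: w_def sum.remove)
  then have "- w = (\<Sum>y\<in>Y - {y0}. u y *\<^sub>R y)"
    by (metis neg_eq_iff_add_eq_0)
  also have "\<dots> \<in> \<sigma>"
    using fin_Y u(1) Y_sub by (intro sum_mem) auto
  finally have "w \<in> \<sigma> \<inter> uminus ` \<sigma>"
    using \<open>w \<in> \<sigma>\<close> by (metis IntI image_eqI minus_minus)
  then have "w = 0"
    using assms by (auto simp: strongly_convex_def)
  then show False
    using y0(1) u_pos zero_notin by (auto simp: w_def)
qed

lemma interior_dual_cone_nonempty:
  assumes "strongly_convex \<sigma>"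
  shows "interior (dual_cone \<sigma>) \<noteq> {}"
proof -
  define Y where "Y = rvec ` {g\<in>G. rvec g \<noteq> 0}"
  have fin_Y: "finite Y"
    using finite_generators by (simp add: Y_def)
  have "closed (convex hull Y)"
    using fin_Y by (simp add: compact_imp_closed finite_imp_compact_convex_hull)
  then obtain a b where ab: "0 < b" "\<forall>x\<in>convex hull Y. a \<bullet> x > b"
    using separating_hyperplane_closed_0 convex_convex_hull
      zero_notin_convex_hull_generators[OF assms] unfolding Y_def by blast
  define U where "U = (\<Inter>y\<in>Y. {x. y \<bullet> x > 0})"
  have "open U"
    unfolding U_def using fin_Y by (intro open_INT) (auto simp: open_halfspace_gt)
  moreover have "a \<in> U"
    unfolding U_def using ab hull_inc[of _ Y] by (fastforce simp: inner_commute)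
  moreover have "U \<subseteq> dual_cone \<sigma>"
    unfolding dual_cone_eq U_def Y_def by (force simp: less_imp_le)
  ultimately show ?thesis
    using interior_maximal by blast
qed

end

lemma dual_cone_pointed:
  assumes "full_dim \<sigma>" "u \<in> dual_cone \<sigma>" "- u \<in> dual_cone \<sigma>"
  shows "u = 0"
proof (rule ccontr)
  assume "u \<noteq> 0"
  have "\<sigma> \<subseteq> {x. u \<bullet> x = 0}"
    using assms(2,3) by (force simp: dual_cone_def)
  then have "interior \<sigma> = {}"
    using interior_mono interior_hyperplane[OF \<open>u \<noteq> 0\<close>] by blast
  with assms(1) show False
    by (simp add: full_dim_def)
qed

lemma semigrp_iff_facet_inequalities:
  assumes "toric_setup \<sigma> h"
  shows "a \<in> semigrp \<sigma> \<longleftrightarrow> (\<forall>i. 0 \<le> hv (h i) a)"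
proof -
  obtain G where "finite G" "\<sigma> = {(\<Sum>g\<in>G. c g *\<^sub>R rvec g) | c. \<forall>g\<in>G. 0 \<le> c g}"
    using assms by (auto simp: toric_setup_def rat_poly_cone_def)
  then interpret finitely_generated_cone \<sigma> G
    by unfold_locales
  have facets: "range h = facet_support_functions (dual_cone \<sigma>)"
    using assms by (auto simp: toric_setup_def bij_betw_def)
  have "interior (dual_cone \<sigma>) \<noteq> {}"
    using assms interior_dual_cone_nonempty by (auto simp: toric_setup_def)
  then have "rvec a \<in> dual_cone \<sigma> \<longleftrightarrow> (\<forall>v\<in>facet_support_functions (dual_cone \<sigma>). 0 \<le> rvec v \<bullet> rvec a)"
    using mem_if_facet_support_functions_nonneg[OF _ finite_generators dual_cone_eq]
    by (auto simp: facet_support_functions_def)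
  then show ?thesis
    by (simp add: semigrp_def facets[symmetric] inner_rvec)
qed

lemma semigrp_pointed:
  assumes "full_dim \<sigma>" "a \<in> semigrp \<sigma>" "- a \<in> semigrp \<sigma>"
  shows "a = 0"
  using dual_cone_pointed[OF assms(1), of "rvec a"] assms(2,3)
  by (simp add: semigrp_def rvec_uminus rvec_eq_iff[of a 0, simplified])

section \<open>Monomial ideals and the operator \<open>\<delta>\<close>\<close>

lemma xmon_mult: "xmon a * xmon b = xmon (a + b)"
  by (simp add: xmon_def mult_single)

lemma poly_mapping_sum_single_keys:
  "p = (\<Sum>a\<in>Poly_Mapping.keys p. Poly_Mapping.single a (Poly_Mapping.lookup p a))"
proof (rule poly_mapping_eqI)
  fix x
  have "Poly_Mapping.lookup (\<Sum>a\<in>Poly_Mapping.keys p. Poly_Mapping.single a (Poly_Mapping.lookup p a)) x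
      = (\<Sum>a\<in>Poly_Mapping.keys p. if a = x then Poly_Mapping.lookup p a else 0)"
    by (simp add: lookup_sum lookup_single when_def)
  also have "\<dots> = Poly_Mapping.lookup p x"
    by (simp add: in_keys_iff)
  finally show "Poly_Mapping.lookup p x =
      Poly_Mapping.lookup (\<Sum>a\<in>Poly_Mapping.keys p. Poly_Mapping.single a (Poly_Mapping.lookup p a)) x"
    by simp
qed

lemma ideal_sum_mem:
  assumes "is_ideal \<sigma> J" "finite A" "\<And>a. a \<in> A \<Longrightarrow> g a \<in> J"
  shows "sum g A \<in> J"
  using assms(2,3) by (induction A rule: finite_induct) (use assms(1) in \<open>auto simp: is_ideal_def\<close>)

lemma keys_xmon [simp]: "Poly_Mapping.keys (xmon a) = {a}"
  by (simp add: xmon_def)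

lemma Exp_add_semigrp:
  assumes "is_ideal \<sigma> I" "a \<in> Exp \<sigma> I" "s \<in> semigrp \<sigma>"
  shows "a + s \<in> Exp \<sigma> I"
proof -
  have "xmon s \<in> Rring \<sigma>"
    using assms(3) by (simp add: Rring_def)
  then have "xmon s * xmon a \<in> I"
    using assms(1,2) by (auto simp: is_ideal_def Exp_def)
  then have "xmon (a + s) \<in> I"
    by (simp add: xmon_mult add.commute)
  moreover from this have "a + s \<in> semigrp \<sigma>"
    using assms(1) by (auto simp: is_ideal_def Rring_def)
  ultimately show ?thesis
    by (simp add: Exp_def)
qed

lemma keys_subset_Exp:
  assumes I: "monomial_ideal \<sigma> I" and p: "p \<in> I"
  shows "Poly_Mapping.keys p \<subseteq> Exp \<sigma> I"
proof -
  have I_ideal: "is_ideal \<sigma> I"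
    using I by (simp add: monomial_ideal_def)
  define J where "J = {p \<in> Rring \<sigma>. Poly_Mapping.keys p \<subseteq> Exp \<sigma> I}"
  have mult_J: "r * x \<in> J" if "r \<in> Rring \<sigma>" "x \<in> J" for r x
  proof -
    have "c \<in> Exp \<sigma> I" if "c \<in> Poly_Mapping.keys (r * x)" for c
    proof -
      obtain a b where "c = b + a" "a \<in> Poly_Mapping.keys r" "b \<in> Poly_Mapping.keys x"
        using keys_mult \<open>c \<in> Poly_Mapping.keys (r * x)\<close> by (force simp: add.commute)
      moreover have "a \<in> semigrp \<sigma>" "b \<in> Exp \<sigma> I"
        using calculation \<open>r \<in> Rring \<sigma>\<close> \<open>x \<in> J\<close> by (auto simp: Rring_def J_def)
      ultimately show ?thesis
        using Exp_add_semigrp[OF I_ideal] by simp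
    qed
    then show ?thesis
      by (auto simp: J_def Rring_def Exp_def)
  qed
  have "is_ideal \<sigma> J" unfolding is_ideal_def
  proof (intro conjI ballI)
    show "J \<subseteq> Rring \<sigma>" "0 \<in> J"
      by (auto simp: J_def Rring_def)
    show "x + y \<in> J" if "x \<in> J" "y \<in> J" for x y
      using that keys_add[of x y] by (auto simp: J_def Rring_def)
  qed (rule mult_J)
  moreover have "{xmon a | a. xmon a \<in> I} \<subseteq> J"
    using I_ideal by (fastforce simp: J_def Rring_def Exp_def is_ideal_def)
  ultimately have "ideal_gen \<sigma> {xmon a | a. xmon a \<in> I} \<subseteq> J"
    unfolding ideal_gen_def by blast
  with I p show ?thesis
    by (auto simp: monomial_ideal_def J_def)
qed

lemma mem_ideal_if_keys_generated:
  assumes J: "is_ideal \<sigma> J"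
    and gens: "\<And>a. a \<in> Poly_Mapping.keys p \<Longrightarrow> \<exists>s m. s \<in> semigrp \<sigma> \<and> a = s + m \<and> xmon m \<in> J"
  shows "p \<in> J"
proof -
  have "Poly_Mapping.single a (Poly_Mapping.lookup p a) \<in> J" if a: "a \<in> Poly_Mapping.keys p" for a
  proof -
    obtain s m where sm: "s \<in> semigrp \<sigma>" "a = s + m" "xmon m \<in> J"
      using gens[OF a] by blast
    then have "Poly_Mapping.single s (Poly_Mapping.lookup p a) * xmon m \<in> J"
      using J by (auto simp: is_ideal_def Rring_def)
    then show ?thesis
      by (simp add: xmon_def mult_single sm(2))
  qed
  then have "(\<Sum>a\<in>Poly_Mapping.keys p. Poly_Mapping.single a (Poly_Mapping.lookup p a)) \<in> J"
    by (intro ideal_sum_mem[OF J]) auto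
  then show ?thesis
    by (subst poly_mapping_sum_single_keys)
qed

lemma delta_xmon: "delta d f (xmon a) = Poly_Mapping.single (a + d) (f (cvec a))"
  by (simp add: delta_def xmon_def)

lemma lookup_delta:
  "Poly_Mapping.lookup (delta d f p) x =
     (\<Sum>b\<in>Poly_Mapping.keys p. if b + d = x then Poly_Mapping.lookup p b * f (cvec b) else 0)"
  by (simp add: delta_def lookup_sum lookup_single when_def)

lemma Exp_delta_step_up:
  assumes "monomial_ideal \<sigma> I" "delta d f ` I \<subseteq> I"
    and "a \<in> Exp \<sigma> I" "f (cvec a) \<noteq> 0"
  shows "a + d \<in> Exp \<sigma> I"
proof -
  have "delta d f (xmon a) \<in> I"
    using assms(2,3) by (auto simp: Exp_def)
  moreover have "Poly_Mapping.keys (delta d f (xmon a)) = {a + d}"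
    using assms(4) by (simp add: delta_xmon)
  ultimately show ?thesis
    using keys_subset_Exp[OF assms(1)] by blast
qed

lemma Exp_delta_step_down:
  assumes "monomial_ideal \<sigma> I" "I \<subseteq> delta d f ` I" and "a \<in> Exp \<sigma> I"
  shows "a - d \<in> Exp \<sigma> I \<and> f (cvec (a - d)) \<noteq> 0"
proof -
  obtain p where p: "p \<in> I" "xmon a = delta d f p"
    using assms(2,3) by (auto simp: Exp_def)
  have "(\<Sum>b\<in>Poly_Mapping.keys p. if b + d = a then Poly_Mapping.lookup p b * f (cvec b) else 0) \<noteq> 0"
    using arg_cong[OF p(2), of "\<lambda>q. Poly_Mapping.lookup q a"] by (simp add: lookup_delta xmon_def)
  then obtain b where "b \<in> Poly_Mapping.keys p"
      "(if b + d = a then Poly_Mapping.lookup p b * f (cvec b) else 0) \<noteq> 0"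
    by (rule sum.not_neutral_contains_not_neutral)
  then have "b \<in> Poly_Mapping.keys p" "b + d = a" "f (cvec b) \<noteq> 0"
    by (auto split: if_splits)
  moreover have "b = a - d"
    using \<open>b + d = a\<close> by (simp add: eq_diff_eq)
  ultimately show ?thesis
    using keys_subset_Exp[OF assms(1) p(1)] by auto
qed

section \<open>Valuations along a line in direction \<open>e\<close>\<close>

lemma primitive_vec_real_multiple:
  assumes e: "primitive_vec e" and w: "\<And>k. real_of_int (w $ k) = s * real_of_int (e $ k)"
  obtains j where "w = j *s e" "s = real_of_int j"
proof -
  obtain k0 where k0: "e $ k0 \<noteq> 0"
    using primitive_vec_nonzero[OF e] by (auto simp: vec_eq_iff)
  define g where "g = gcd (w $ k0) (e $ k0)"
  have "g \<noteq> 0"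
    using k0 by (simp add: g_def)
  then obtain n m where nm: "w $ k0 = n * g" "e $ k0 = m * g" "coprime n m"
    using gcd_coprime_exists[of "w $ k0" "e $ k0"] unfolding g_def by blast
  have "real_of_int n * real_of_int g = (s * real_of_int m) * real_of_int g"
    using w[of k0] nm(1,2) by (simp add: mult.assoc)
  then have s_m: "real_of_int n = s * real_of_int m"
    using \<open>g \<noteq> 0\<close> by simp
  have "m dvd e $ k" for k
  proof -
    have "real_of_int (w $ k * m) = real_of_int (n * e $ k)"
      using w[of k] s_m by (simp add: algebra_simps)
    then have "m dvd n * e $ k"
      by (metis dvd_triv_right of_int_eq_iff)
    with nm(3) show ?thesis
      by (simp add: coprime_commute coprime_dvd_mult_right_iff)
  qed
  then have "is_unit m"
    using e by (simp add: primitive_vec_def)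
  then have "m = 1 \<or> m = -1"
    by auto
  then have s_int: "s = real_of_int (n * m)"
    using s_m by auto
  have "w $ k = (n * m) * e $ k" for k
    using w[of k] s_int by (metis of_int_eq_iff of_int_mult)
  then have "w = (n * m) *s e"
    by (simp add: vec_eq_iff)
  with s_int that show ?thesis by blast
qed

locale lattice_line =
  fixes d e :: "int ^ 'd" and q :: nat
  assumes e_primitive: "primitive_vec e"
    and q_pos: "1 \<le> q"
    and d_eq: "d = of_nat q *s e"
begin

lemma e_nonzero: "e \<noteq> 0"
  using e_primitive by (rule primitive_vec_nonzero)

lemma rvec_d: "rvec d = real q *\<^sub>R rvec e"
  by (simp add: d_eq rvec_smult)

lemma lattice_point_on_line:
  assumes "rvec z = rvec c + t *\<^sub>R rvec d"
  obtains j where "z = c + j *s e" "t = real_of_int j / real q"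
proof -
  have "real_of_int ((z - c) $ k) = (t * real q) * real_of_int (e $ k)" for k
    using arg_cong[OF assms, of "\<lambda>x. x $ k"] by (simp add: rvec_def d_eq)
  then obtain j where "z - c = j *s e" "t * real q = real_of_int j"
    by (rule primitive_vec_real_multiple[OF e_primitive])
  moreover have "t = real_of_int j / real q"
    using q_pos calculation(2) by (simp add: eq_divide_eq)
  ultimately show ?thesis
    using that by (simp add: algebra_simps)
qed

lemma line_zeros_iff:
  "t \<in> line_zeros d f c \<longleftrightarrow> (\<exists>j. t = real_of_int j / real q \<and> f (cvec (c + j *s e)) = 0)"
proof
  assume "t \<in> line_zeros d f c"
  then obtain z where z: "f (cvec z) = 0" "rvec z = rvec c + t *\<^sub>R rvec d"
    by (auto simp: line_zeros_def Vmon_def)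
  obtain j where "z = c + j *s e" "t = real_of_int j / real q"
    using lattice_point_on_line[OF z(2)] .
  with z(1) show "\<exists>j. t = real_of_int j / real q \<and> f (cvec (c + j *s e)) = 0"
    by blast
next
  assume "\<exists>j. t = real_of_int j / real q \<and> f (cvec (c + j *s e)) = 0"
  then obtain j where j: "t = real_of_int j / real q" "f (cvec (c + j *s e)) = 0"
    by blast
  then have "rvec (c + j *s e) = rvec c + t *\<^sub>R rvec d"
    using q_pos by (simp add: rvec_add rvec_smult rvec_d)
  with j(2) show "t \<in> line_zeros d f c"
    by (auto simp: line_zeros_def Vmon_def)
qed

lemma finite_line_zeros_window: "finite {t \<in> line_zeros d f c. v \<le> t \<and> t < v + 1}"
proof (rule finite_subset)
  show "{t \<in> line_zeros d f c. v \<le> t \<and> t < v + 1}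
      \<subseteq> (\<lambda>j. real_of_int j / real q) ` {\<lfloor>v * real q\<rfloor> .. \<lceil>(v + 1) * real q\<rceil>}"
  proof
    fix t assume t: "t \<in> {t \<in> line_zeros d f c. v \<le> t \<and> t < v + 1}"
    then obtain j where j: "t = real_of_int j / real q"
      by (auto simp: line_zeros_iff)
    have "v * real q \<le> real_of_int j" "real_of_int j < (v + 1) * real q"
      using t j q_pos by (simp_all add: pos_le_divide_eq pos_divide_less_eq)
    then have "j \<in> {\<lfloor>v * real q\<rfloor> .. \<lceil>(v + 1) * real q\<rceil>}"
      by simp linarith
    with j show "t \<in> (\<lambda>j. real_of_int j / real q) ` {\<lfloor>v * real q\<rfloor> .. \<lceil>(v + 1) * real q\<rceil>}"
      by blast
  qed
qed simp

lemma vpt_eqI: "rvec z = rvec c + pval d f c *\<^sub>R rvec d \<Longrightarrow> vpt d f c = z"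
  unfolding vpt_def by (rule the_equality) (simp, metis rvec_eq_iff)

lemma vpt_mem_line:
  assumes "\<bar>val d f c\<bar> \<noteq> \<infinity>"
  obtains j where "vpt d f c = c + j *s e"
proof -
  obtain v where v: "val d f c = ereal v"
    using assms by (cases "val d f c") auto
  define T where "T = line_zeros d f c"
  have "Inf (ereal ` T) < ereal (v + 1)"
    using v by (simp add: val_def T_def)
  then obtain t where t: "t \<in> T" "t < v + 1"
    by (auto simp: Inf_less_iff)
  have "Inf (ereal ` T) \<le> ereal t"
    using t(1) by (intro Inf_lower) simp
  then have "ereal v \<le> ereal t"
    using v by (simp add: val_def T_def)
  then have t_window: "t \<in> {t \<in> T. v \<le> t \<and> t < v + 1}"
    using t by simp
  have "pval d f c = Max {t \<in> T. v \<le> t \<and> t < v + 1}"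
    by (simp add: pval_def v T_def)
  also have "\<dots> \<in> {t \<in> T. v \<le> t \<and> t < v + 1}"
    using finite_line_zeros_window t_window unfolding T_def by (intro Max_in) auto
  finally have "pval d f c \<in> line_zeros d f c"
    by (simp add: T_def)
  then obtain z where "rvec z = rvec c + pval d f c *\<^sub>R rvec d"
    by (auto simp: line_zeros_def)
  moreover from this obtain j where "z = c + j *s e"
    by (rule lattice_point_on_line)
  ultimately show ?thesis
    using that vpt_eqI by blast
qed

context
  fixes f :: "complex ^ 'd \<Rightarrow> complex" and c :: "int ^ 'd" and M :: int
  assumes nonzero_below: "\<And>j. j \<le> M - int q \<Longrightarrow> f (cvec (c + j *s e)) \<noteq> 0"
    and zero_top: "\<And>j. M - int q < j \<Longrightarrow> j \<le> M \<Longrightarrow> f (cvec (c + j *s e)) = 0"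
begin

lemma val_on_line: "val d f c = ereal (real_of_int (M - int q + 1) / real q)"
  unfolding val_def
proof (rule cInf_eq_minimum)
  have "f (cvec (c + (M - int q + 1) *s e)) = 0"
    using q_pos by (intro zero_top) auto
  then have "real_of_int (M - int q + 1) / real q \<in> line_zeros d f c"
    unfolding line_zeros_iff by blast
  then show "ereal (real_of_int (M - int q + 1) / real q) \<in> ereal ` line_zeros d f c"
    by (rule imageI)
  fix x assume "x \<in> ereal ` line_zeros d f c"
  then obtain t where "x = ereal t" "t \<in> line_zeros d f c"
    by blast
  then obtain j where "x = ereal (real_of_int j / real q)" "f (cvec (c + j *s e)) = 0"
    unfolding line_zeros_iff by blast
  moreover from this have "M - int q + 1 \<le> j"
    using nonzero_below[of j] by linarith
  ultimately show "ereal (real_of_int (M - int q + 1) / real q) \<le> x"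
    using q_pos by (simp add: divide_right_mono)
qed

lemma pval_on_line: "pval d f c = real_of_int M / real q"
proof -
  define W where "W = {t \<in> line_zeros d f c.
      real_of_int (M - int q + 1) / real q \<le> t \<and> t < real_of_int (M - int q + 1) / real q + 1}"
  have q_real: "real q > 0"
    using q_pos by simp
  have window: "real_of_int (M - int q + 1) / real q + 1 = real_of_int (M + 1) / real q"
    using q_real by (simp add: field_simps)
  have "Max W = real_of_int M / real q"
  proof (rule Max_eqI)
    show "finite W"
      unfolding W_def by (rule finite_line_zeros_window)
    have "f (cvec (c + M *s e)) = 0"
      using q_pos by (intro zero_top) auto
    then have "real_of_int M / real q \<in> line_zeros d f c"
      unfolding line_zeros_iff by blast
    moreover have "real_of_int (M - int q + 1) / real q \<le> real_of_int M / real q"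
      using q_real q_pos by (intro divide_right_mono) auto
    moreover have "real_of_int M / real q < real_of_int (M + 1) / real q"
      using q_real by (intro divide_strict_right_mono) auto
    ultimately show "real_of_int M / real q \<in> W"
      unfolding W_def window by blast
    fix t assume "t \<in> W"
    then obtain j where "t = real_of_int j / real q" "real_of_int j / real q < real_of_int (M + 1) / real q"
      unfolding W_def window line_zeros_iff by blast
    moreover from this have "j \<le> M"
      using q_real by (simp add: divide_less_cancel)
    ultimately show "t \<le> real_of_int M / real q"
      using q_real by (simp add: divide_right_mono)
  qed
  then show ?thesis
    by (simp add: pval_def val_on_line W_def)
qed

lemma vpt_on_line: "vpt d f c = c + M *s e"
  using q_pos by (intro vpt_eqI) (simp add: pval_on_line rvec_add rvec_smult rvec_d)

end

end

section \<open>Monomial ideals fixed by \<open>\<delta>\<close>\<close>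

lemma down_closed_int_set_eq_atMost:
  fixes J :: "int set"
  assumes "j0 \<in> J" "\<And>j. j \<in> J \<Longrightarrow> j < N" "\<And>j j'. j \<in> J \<Longrightarrow> j' \<le> j \<Longrightarrow> j' \<in> J"
  obtains M where "\<And>j. j \<in> J \<longleftrightarrow> j \<le> M"
proof -
  define M where "M = Max {j \<in> J. j0 \<le> j}"
  have fin: "finite {j \<in> J. j0 \<le> j}"
    by (rule finite_subset[of _ "{j0..N}"]) (auto dest: assms(2) less_imp_le)
  then have "M \<in> J" "j0 \<le> M"
    using Max_in[OF fin] Max_ge[OF fin] assms(1) unfolding M_def by auto
  moreover have "j \<le> M" if "j \<in> J" for j
    using that Max_ge[OF fin, of j] \<open>j0 \<le> M\<close> unfolding M_def by (cases "j0 \<le> j") auto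
  ultimately show ?thesis
    using that assms(3) by blast
qed

locale delta_fixed_monomial_ideal = lattice_line d e q
  for d e :: "int ^ 'd" and q :: nat +
  fixes \<sigma> :: "(real ^ 'd) set" and h :: "'i::finite \<Rightarrow> int ^ 'd"
    and f :: "complex ^ 'd \<Rightarrow> complex" and I :: "'d laurent set"
  assumes toric: "toric_setup \<sigma> h"
    and neg_d_mem: "- d \<in> semigrp \<sigma>"
    and I_monomial: "monomial_ideal \<sigma> I"
    and delta_fixed: "delta d f ` I = I"
begin

abbreviation S where "S \<equiv> semigrp \<sigma>"

abbreviation E where "E \<equiv> Exp \<sigma> I"

lemma semigrp_iff: "a \<in> S \<longleftrightarrow> (\<forall>i. 0 \<le> hv (h i) a)"
  using semigrp_iff_facet_inequalities[OF toric] .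

lemma hv_neg_e_nonneg: "0 \<le> hv (h i) (- e)"
proof -
  have "0 \<le> hv (h i) (- d)"
    using neg_d_mem semigrp_iff by blast
  then have "0 \<le> int q * hv (h i) (- e)"
    by (simp add: d_eq hv_uminus hv_smult)
  then show ?thesis
    using q_pos by (simp add: zero_le_mult_iff)
qed

lemma hv_neg_e_pos: "hv (h i) d \<noteq> 0 \<Longrightarrow> 1 \<le> hv (h i) (- e)"
  using hv_neg_e_nonneg[of i] by (simp add: d_eq hv_smult hv_uminus)

lemma smult_neg_e_mem: "0 \<le> k \<Longrightarrow> k *s (- e) \<in> S"
  unfolding semigrp_iff hv_smult using hv_neg_e_nonneg by simp

lemma exists_facet_e_neg: "\<exists>i. hv (h i) e < 0"
proof -
  have "- e \<in> S"
    using smult_neg_e_mem[of 1] by simp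
  then have "e \<notin> S"
    using semigrp_pointed[of \<sigma> e] toric e_nonzero by (auto simp: toric_setup_def)
  then show ?thesis
    by (auto simp: semigrp_iff not_le)
qed

lemma line_leaves_semigrp: "\<exists>N. \<forall>j\<ge>N. c + j *s e \<notin> S"
proof -
  obtain i where i: "hv (h i) e < 0"
    using exists_facet_e_neg by blast
  have "c + j *s e \<notin> S" if "j \<ge> \<bar>hv (h i) c\<bar> + 1" for j
  proof
    assume "c + j *s e \<in> S"
    then have "0 \<le> hv (h i) c + j * hv (h i) e"
      by (simp add: semigrp_iff hv_add hv_smult)
    moreover have "j * hv (h i) e \<le> - j"
      using mult_left_mono[of "hv (h i) e" "- 1" j] i that by simp
    ultimately show False
      using that by simp
  qed
  then show ?thesis by blast
qed

lemma I_ideal: "is_ideal \<sigma> I"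
  using I_monomial by (simp add: monomial_ideal_def)

lemma Exp_mem_semigrp: "a \<in> E \<Longrightarrow> a \<in> S"
  by (simp add: Exp_def)

lemma Exp_add: "a \<in> E \<Longrightarrow> s \<in> S \<Longrightarrow> a + s \<in> E"
  by (rule Exp_add_semigrp[OF I_ideal])

lemma Exp_line_down:
  assumes "c + j *s e \<in> E" "j' \<le> j"
  shows "c + j' *s e \<in> E"
proof -
  have "(c + j *s e) + (j - j') *s (- e) \<in> E"
    using assms(2) by (intro Exp_add[OF assms(1)] smult_neg_e_mem) simp
  moreover have "(c + j *s e) + (j - j') *s (- e) = c + j' *s e"
    by (simp add: vec_eq_iff algebra_simps)
  ultimately show ?thesis by simp
qed

lemma Exp_line_eq_atMost:
  assumes "c + j0 *s e \<in> E"
  obtains M where "\<And>j. c + j *s e \<in> E \<longleftrightarrow> j \<le> M"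
proof -
  obtain N where "\<forall>j\<ge>N. c + j *s e \<notin> S"
    using line_leaves_semigrp by blast
  then have "j < N" if "c + j *s e \<in> E" for j
    using that Exp_mem_semigrp not_le by blast
  then obtain M where "\<And>j. j \<in> {j. c + j *s e \<in> E} \<longleftrightarrow> j \<le> M"
    using down_closed_int_set_eq_atMost[of j0 "{j. c + j *s e \<in> E}" N] assms Exp_line_down by blast
  with that show ?thesis by simp
qed

context
  fixes c :: "int ^ 'd" and M :: int
  assumes top: "\<And>j. c + j *s e \<in> E \<longleftrightarrow> j \<le> M"
begin

lemma nonzero_below_top: "j \<le> M - int q \<Longrightarrow> f (cvec (c + j *s e)) \<noteq> 0"
proof -
  assume "j \<le> M - int q"
  then have "c + (j + int q) *s e \<in> E"
    using top[of "j + int q"] by linarith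
  then have "f (cvec (c + (j + int q) *s e - d)) \<noteq> 0"
    using Exp_delta_step_down[OF I_monomial] delta_fixed by blast
  moreover have "c + (j + int q) *s e - d = c + j *s e"
    by (simp add: d_eq vec_eq_iff algebra_simps)
  ultimately show ?thesis by simp
qed

lemma zero_at_top: "M - int q < j \<Longrightarrow> j \<le> M \<Longrightarrow> f (cvec (c + j *s e)) = 0"
proof (rule ccontr)
  assume j: "M - int q < j" "j \<le> M" and "f (cvec (c + j *s e)) \<noteq> 0"
  then have "c + j *s e + d \<in> E"
    using top Exp_delta_step_up[OF I_monomial] delta_fixed by blast
  moreover have "c + j *s e + d = c + (j + int q) *s e"
    by (simp add: d_eq vec_eq_iff algebra_simps)
  ultimately show False
    using top[of "j + int q"] j by simp
qed

lemmas val_pval_vpt_top =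
  val_on_line[where f = f and c = c and M = M, OF nonzero_below_top zero_at_top]
  pval_on_line[where f = f and c = c and M = M, OF nonzero_below_top zero_at_top]
  vpt_on_line[where f = f and c = c and M = M, OF nonzero_below_top zero_at_top]

end

text \<open>
  \<open>W\<^sub>\<B>\<close> for this \<open>\<B>\<close> consists of the points of \<open>S\<close> that dominate some exponent of \<open>I\<close>
  in every facet function constant along \<open>d\<close>; the other facet functions grow without bound
  along \<open>-e\<close>, so the line through such a point meets \<open>Exp I\<close>.
\<close>

definition exponent_bounds :: "('i \<Rightarrow> nat) set" where
  "exponent_bounds =
    {\<beta>. compatible h d \<beta> \<and> (\<exists>b\<in>E. \<forall>i. hv (h i) d = 0 \<longrightarrow> hv (h i) b \<le> int (\<beta> i))}"

abbreviation W_Exp where "W_Exp \<equiv> WB \<sigma> h exponent_bounds"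

lemma mem_W_Exp_iff:
  "a \<in> W_Exp \<longleftrightarrow> a \<in> S \<and> (\<exists>b\<in>E. \<forall>i. hv (h i) d = 0 \<longrightarrow> hv (h i) b \<le> hv (h i) a)"
proof
  assume "a \<in> W_Exp"
  then obtain \<beta> b where "a \<in> W \<sigma> h \<beta>" and b: "b \<in> E" "\<forall>i. hv (h i) d = 0 \<longrightarrow> hv (h i) b \<le> int (\<beta> i)"
    by (auto simp: WB_def exponent_bounds_def)
  then have "a \<in> S" "\<forall>i. int (\<beta> i) \<le> hv (h i) a"
    by (auto simp: W_def)
  with b show "a \<in> S \<and> (\<exists>b\<in>E. \<forall>i. hv (h i) d = 0 \<longrightarrow> hv (h i) b \<le> hv (h i) a)"
    by (meson order_trans)
next
  assume a: "a \<in> S \<and> (\<exists>b\<in>E. \<forall>i. hv (h i) d = 0 \<longrightarrow> hv (h i) b \<le> hv (h i) a)"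
  define \<beta> where "\<beta> i = (if hv (h i) d = 0 then nat (hv (h i) a) else 0)" for i
  have "0 \<le> hv (h i) a" for i
    using a semigrp_iff by blast
  with a have "\<beta> \<in> exponent_bounds" "a \<in> W \<sigma> h \<beta>"
    by (auto simp: exponent_bounds_def compatible_def W_def \<beta>_def)
  then show "a \<in> W_Exp"
    by (auto simp: WB_def)
qed

lemma Exp_subset_W_Exp: "E \<subseteq> W_Exp"
  using Exp_mem_semigrp by (auto simp: mem_W_Exp_iff)

lemma W_Exp_line_meets_Exp:
  assumes "a \<in> W_Exp"
  obtains j where "a + j *s e \<in> E"
proof -
  obtain b where b: "b \<in> E" "\<forall>i. hv (h i) d = 0 \<longrightarrow> hv (h i) b \<le> hv (h i) a"
    using assms by (auto simp: mem_W_Exp_iff)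
  define k where "k = (\<Sum>i\<in>UNIV. \<bar>hv (h i) (a - b)\<bar>)"
  have k_ge: "\<bar>hv (h i) (a - b)\<bar> \<le> k" for i
    unfolding k_def by (rule member_le_sum) auto
  have "0 \<le> hv (h i) (a + (- k) *s e - b)" for i
  proof -
    have eq: "hv (h i) (a + (- k) *s e - b) = hv (h i) (a - b) + k * hv (h i) (- e)"
      by (simp add: hv_add hv_diff hv_smult hv_uminus algebra_simps)
    show ?thesis
    proof (cases "hv (h i) d = 0")
      case True
      then have "hv (h i) e = 0"
        using q_pos by (simp add: d_eq hv_smult)
      then show ?thesis
        using eq b(2) True by (simp add: hv_uminus hv_diff)
    next
      case False
      have "0 \<le> k"
        using k_ge[of i] by linarith
      then have "k \<le> k * hv (h i) (- e)"
        using mult_left_mono[OF hv_neg_e_pos[OF False]] by fastforce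
      then show ?thesis
        using eq k_ge[of i] by linarith
    qed
  qed
  then have "b + (a + (- k) *s e - b) \<in> E"
    by (intro Exp_add[OF b(1)]) (simp add: semigrp_iff)
  then show ?thesis
    using that[of "- k"] by (simp add: algebra_simps)
qed

lemma W_Exp_line_top:
  assumes "a \<in> W_Exp"
  obtains M where "\<And>j. a + j *s e \<in> E \<longleftrightarrow> j \<le> M"
  using W_Exp_line_meets_Exp[OF assms] Exp_line_eq_atMost by metis

lemma Exp_top_point:
  assumes "a \<in> E"
  obtains M where "0 \<le> M" "a + M *s e \<in> Vmon' d f \<inter> E" "pval d f a = real_of_int M / real q"
proof -
  obtain M where top: "\<And>j. a + j *s e \<in> E \<longleftrightarrow> j \<le> M"
    using Exp_line_eq_atMost[of a 0] assms by auto
  have "0 \<le> M"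
    using top[of 0] assms by simp
  moreover have "a + M *s e \<in> Vmon' d f"
    using val_pval_vpt_top[OF top] unfolding Vmon'_def by (intro CollectI exI[of _ a]) simp
  ultimately show ?thesis
    using that top val_pval_vpt_top(2)[OF top] by simp
qed

lemma Vmon'_W_Exp_top:
  assumes "a \<in> Vmon' d f" "a \<in> W_Exp"
  shows "a \<in> E" "a + e \<notin> E" "\<And>i. i < q \<Longrightarrow> a - of_nat i *s e \<in> Vmon f"
proof -
  obtain c where c: "a = vpt d f c" "\<bar>val d f c\<bar> \<noteq> \<infinity>"
    using assms(1) by (auto simp: Vmon'_def)
  obtain j where j: "a = c + j *s e"
    using vpt_mem_line[OF c(2)] c(1) by metis
  obtain M' where "\<And>k. a + k *s e \<in> E \<longleftrightarrow> k \<le> M'"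
    using W_Exp_line_top[OF assms(2)] by blast
  then have "a + M' *s e \<in> E"
    by blast
  moreover have "a + M' *s e = c + (j + M') *s e"
    using j by (simp add: vec_eq_iff algebra_simps)
  ultimately have "c + (j + M') *s e \<in> E"
    by metis
  then obtain M where top: "\<And>k. c + k *s e \<in> E \<longleftrightarrow> k \<le> M"
    by (metis Exp_line_eq_atMost)
  have a_eq: "a = c + M *s e"
    using c(1) val_pval_vpt_top(3)[OF top] by simp
  show "a \<in> E"
    using top a_eq by simp
  have "a + e = c + (M + 1) *s e"
    using a_eq by (simp add: vec_eq_iff algebra_simps)
  moreover have "c + (M + 1) *s e \<notin> E"
    using top[of "M + 1"] by simp
  ultimately show "a + e \<notin> E"
    by metis
  fix i assume "i < q"
  have "a - of_nat i *s e = c + (M - int i) *s e"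
    using a_eq by (simp add: vec_eq_iff algebra_simps)
  moreover have "f (cvec (c + (M - int i) *s e)) = 0"
    using \<open>i < q\<close> by (intro zero_at_top[OF top]) auto
  ultimately show "a - of_nat i *s e \<in> Vmon f"
    by (simp only: Vmon_def mem_Collect_eq)
qed

lemma val_W_Exp_gt_MInfty:
  assumes "a \<in> W_Exp"
  shows "val d f a > - \<infinity>"
proof -
  obtain M where top: "\<And>j. a + j *s e \<in> E \<longleftrightarrow> j \<le> M"
    using W_Exp_line_top[OF assms] by blast
  show ?thesis
    using val_pval_vpt_top(1)[OF top] by simp
qed

lemma Vmon'_W_Exp_diff_notin:
  assumes "a \<in> Vmon' d f \<inter> W_Exp" "b \<in> Vmon' d f \<inter> W_Exp"
  shows "a - b \<notin> {s - e | s. s \<in> S}"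
proof
  assume "a - b \<in> {s - e | s. s \<in> S}"
  then obtain s where "s \<in> S" "b + s = a + e"
    by (auto simp: algebra_simps eq_diff_eq)
  moreover have "b \<in> E"
    using Vmon'_W_Exp_top(1) assms(2) by blast
  ultimately have "a + e \<in> E"
    using Exp_add by metis
  with Vmon'_W_Exp_top(2) assms(1) show False
    by blast
qed

lemma ideal_eq_gen_Vmon'_W_Exp: "I = ideal_gen \<sigma> {xmon a | a. a \<in> Vmon' d f \<inter> W_Exp}"
proof
  have "{xmon a | a. a \<in> Vmon' d f \<inter> W_Exp} \<subseteq> I"
    using Vmon'_W_Exp_top(1) by (auto simp: Exp_def)
  then show "ideal_gen \<sigma> {xmon a | a. a \<in> Vmon' d f \<inter> W_Exp} \<subseteq> I"
    using I_ideal unfolding ideal_gen_def by blast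
next
  show "I \<subseteq> ideal_gen \<sigma> {xmon a | a. a \<in> Vmon' d f \<inter> W_Exp}"
    unfolding ideal_gen_def
  proof (intro subsetI InterI, elim CollectE conjE)
    fix p J
    assume p: "p \<in> I" and J: "is_ideal \<sigma> J" and gens: "{xmon a | a. a \<in> Vmon' d f \<inter> W_Exp} \<subseteq> J"
    show "p \<in> J"
    proof (rule mem_ideal_if_keys_generated[OF J])
      fix x assume "x \<in> Poly_Mapping.keys p"
      then have "x \<in> E"
        using keys_subset_Exp[OF I_monomial p] by blast
      then obtain M where M: "0 \<le> M" "x + M *s e \<in> Vmon' d f \<inter> E"
        by (rule Exp_top_point)
      then have "xmon (x + M *s e) \<in> J"
        using gens Exp_subset_W_Exp by blast
      moreover have "M *s (- e) \<in> S"
        using M(1) by (rule smult_neg_e_mem)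
      moreover have "x = M *s (- e) + (x + M *s e)"
        by (simp add: vec_eq_iff)
      ultimately show "\<exists>s m. s \<in> S \<and> x = s + m \<and> xmon m \<in> J"
        by blast
    qed
  qed
qed

lemma Exp_eq_W_Exp_pval_nonneg: "E = {a \<in> W_Exp. 0 \<le> pval d f a}"
proof
  show "E \<subseteq> {a \<in> W_Exp. 0 \<le> pval d f a}"
  proof
    fix a assume "a \<in> E"
    then obtain M where "0 \<le> M" "pval d f a = real_of_int M / real q"
      by (rule Exp_top_point)
    with \<open>a \<in> E\<close> Exp_subset_W_Exp show "a \<in> {a \<in> W_Exp. 0 \<le> pval d f a}"
      by auto
  qed
  show "{a \<in> W_Exp. 0 \<le> pval d f a} \<subseteq> E"
  proof clarify
    fix a assume a: "a \<in> W_Exp" "0 \<le> pval d f a"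
    obtain M where top: "\<And>j. a + j *s e \<in> E \<longleftrightarrow> j \<le> M"
      using W_Exp_line_top[OF a(1)] by blast
    have "0 \<le> real_of_int M / real q"
      using a(2) val_pval_vpt_top(2)[OF top] by simp
    then have "0 \<le> M"
      using q_pos by (simp add: zero_le_divide_iff)
    then show "a \<in> E"
      using top[of 0] by simp
  qed
qed

end

theorem mainTheorem8:
  fixes \<sigma> :: "(real ^ 'd) set" and h :: "'i::finite \<Rightarrow> int ^ 'd"
    and d e :: "int ^ 'd" and q :: nat
    and f :: "complex ^ 'd \<Rightarrow> complex" and I :: "'d laurent set"
  assumes toric: "toric_setup \<sigma> h"
    and fpoly: "poly_fun f"
    and fdiv: "poly_dvd (Hd h d) f"
    and d_nz: "d \<noteq> 0"
    and negd: "- d \<in> semigrp \<sigma>"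
    and q_pos: "1 \<le> q"
    and e_prim: "primitive_vec e"
    and d_eq: "d = of_nat q *s e"
    and I_mon: "monomial_ideal \<sigma> I"
    and I_nz: "I \<noteq> {0}"
    and fixed: "delta d f ` I = I"
  shows "\<exists>B :: ('i \<Rightarrow> nat) set. (\<forall>\<beta>\<in>B. compatible h d \<beta>) \<and>
      (\<forall>a\<in>WB \<sigma> h B. val d f a > - \<infinity>) \<and>
      (\<forall>a\<in>Vmon' d f \<inter> WB \<sigma> h B. \<forall>i<q. a - of_nat i *s e \<in> Vmon f) \<and>
      (\<forall>a\<in>Vmon' d f \<inter> WB \<sigma> h B. \<forall>b\<in>Vmon' d f \<inter> WB \<sigma> h B.
          a - b \<notin> {s - e | s. s \<in> semigrp \<sigma>}) \<and>
      I = ideal_gen \<sigma> {xmon a | a. a \<in> Vmon' d f \<inter> WB \<sigma> h B} \<and>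
      Exp \<sigma> I = {a \<in> WB \<sigma> h B. pval d f a \<ge> 0}"
proof -
  interpret delta_fixed_monomial_ideal d e q \<sigma> h f I
    using toric negd q_pos e_prim d_eq I_mon fixed by unfold_locales
  show ?thesis
  proof (intro exI[of _ exponent_bounds] conjI ballI allI impI)
    show "compatible h d \<beta>" if "\<beta> \<in> exponent_bounds" for \<beta>
      using that by (simp add: exponent_bounds_def)
    show "val d f a > - \<infinity>" if "a \<in> W_Exp" for a
      using that by (rule val_W_Exp_gt_MInfty)
    show "a - of_nat i *s e \<in> Vmon f" if "a \<in> Vmon' d f \<inter> W_Exp" "i < q" for a i
      using that Vmon'_W_Exp_top(3) by blast
    show "a - b \<notin> {s - e | s. s \<in> S}" if "a \<in> Vmon' d f \<inter> W_Exp" "b \<in> Vmon' d f \<inter> W_Exp" for a b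
      using that by (rule Vmon'_W_Exp_diff_notin)
    show "I = ideal_gen \<sigma> {xmon a | a. a \<in> Vmon' d f \<inter> W_Exp}"
      by (rule ideal_eq_gen_Vmon'_W_Exp)
    show "E = {a \<in> W_Exp. 0 \<le> pval d f a}"
      by (rule Exp_eq_W_Exp_pval_nonneg)
  qed
qed

end
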